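(* Let $H \subset L$ be light-cone regular, $h \in H$ and $h_0 \in H_0$. If $h_0 \le h$ does not hold, then $f_h$ does not depend on the initial variable $f_{h_0}$. Equivalently, if $f_h$ depends on $f_{h_0}$, then $h_0 \le h$.
   Context: Let $R$ be a unique factorization domain with field of fractions $K$. Let $L$ be a finitely generated $\mathbb{Z}$-module, $v_1,\dots,v_N\in L$ distinct elements linearly independent over $\mathbb{Z}_{\ge 0}$ (i.e. $\sum_i a_i v_i=0$ with all $a_i\in\mathbb{Z}_{\ge0}$ forces all $a_i=0$), and $\Phi\in R[Y_1^{\pm1},\dots,Y_N^{\pm1}]$ a Laurent polynomial. Consider the equation $f_h=\Phi(f_{h+v_1},\dots,f_{h+v_N})$ ($h\in L$). Let $S=\{\sum_i a_iv_i : a_i\in\mathbb{Z}_{\ge0}\}$ and define the partial order $h_1\le h_2$ iff $h_1-h_2\in S$. A nonempty subset $H\subset L$ is light-cone regular if for every $h\in H$ the set $\{h'\in H: h'\le h\}$ is finite and $\{h'\in L: h'\ge h\}\subset H$; its initial boundary is $H_0=\{h\in H:\ h+v_i\notin H\text{ for some }i\}$. The $f_{h}$ ($h\in H_0$) are algebraically independent indeterminates over $K$ (initial variables), and for $h\in H\setminus H_0$ the value $f_h$ is defined recursively by the equation as an element of the rational function field $K(f_{h_0}: h_0\in H_0)$. "$f_h$ does not depend on $f_{h_0}$" means $f_h$ lies in the subfield generated over $K$ by the initial variables other than $f_{h_0}$. *)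

theory Defs
  imports Main "HOL-Computational_Algebra.Factorial_Ring" "HOL-Computational_Algebra.Fraction_Field"
    "HOL-Library.Poly_Mapping"
begin

fun nsmul :: "nat \<Rightarrow> 'a::monoid_add \<Rightarrow> 'a" where
  "nsmul 0 x = 0"
| "nsmul (Suc n) x = x + nsmul n x"

definition zsmul :: "int \<Rightarrow> 'a::ab_group_add \<Rightarrow> 'a" where
  "zsmul k x = (if 0 \<le> k then nsmul (nat k) x else - nsmul (nat (- k)) x)"

definition fin_gen_Zmod :: "'a::ab_group_add itself \<Rightarrow> bool" where
  "fin_gen_Zmod _ \<longleftrightarrow> (\<exists>G::'a set. finite G \<and> (\<forall>x. \<exists>c::'a \<Rightarrow> int. x = (\<Sum>g\<in>G. zsmul (c g) g)))"

definition nonneg_indep :: "nat \<Rightarrow> (nat \<Rightarrow> 'a::ab_group_add) \<Rightarrow> bool" where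
  "nonneg_indep N v \<longleftrightarrow> (\<forall>a::nat \<Rightarrow> nat. (\<Sum>i<N. nsmul (a i) (v i)) = 0 \<longrightarrow> (\<forall>i<N. a i = 0))"

definition cone :: "nat \<Rightarrow> (nat \<Rightarrow> 'a::ab_group_add) \<Rightarrow> 'a set" where
  "cone N v = {\<Sum>i<N. nsmul (a i) (v i) | a. True}"

definition cle :: "nat \<Rightarrow> (nat \<Rightarrow> 'a::ab_group_add) \<Rightarrow> 'a \<Rightarrow> 'a \<Rightarrow> bool" where
  "cle N v h1 h2 \<longleftrightarrow> h1 - h2 \<in> cone N v"

definition light_cone_regular :: "nat \<Rightarrow> (nat \<Rightarrow> 'a::ab_group_add) \<Rightarrow> 'a set \<Rightarrow> bool" where
  "light_cone_regular N v H \<longleftrightarrow> H \<noteq> {} \<and>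
     (\<forall>h\<in>H. finite {h'\<in>H. cle N v h' h} \<and> {h'. cle N v h h'} \<subseteq> H)"

definition init_boundary :: "nat \<Rightarrow> (nat \<Rightarrow> 'a::ab_group_add) \<Rightarrow> 'a set \<Rightarrow> 'a set" where
  "init_boundary N v H = {h\<in>H. \<exists>i<N. h + v i \<notin> H}"

definition field_hom :: "('a::field \<Rightarrow> 'b::field) \<Rightarrow> bool" where
  "field_hom \<iota> \<longleftrightarrow> \<iota> 0 = 0 \<and> \<iota> 1 = 1 \<and> (\<forall>x y. \<iota> (x + y) = \<iota> x + \<iota> y) \<and> (\<forall>x y. \<iota> (x * y) = \<iota> x * \<iota> y)"

definition is_subfield :: "'f::field set \<Rightarrow> bool" where
  "is_subfield F \<longleftrightarrow> 0 \<in> F \<and> 1 \<in> F \<and> (\<forall>x\<in>F. \<forall>y\<in>F. x + y \<in> F \<and> x * y \<in> F)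
      \<and> (\<forall>x\<in>F. - x \<in> F \<and> inverse x \<in> F)"

definition gen_subfield :: "'f::field set \<Rightarrow> 'f set" where
  "gen_subfield A = \<Inter>{F. is_subfield F \<and> A \<subseteq> F}"

definition mono_eval :: "('v \<Rightarrow>\<^sub>0 nat) \<Rightarrow> ('v \<Rightarrow> 'f::field) \<Rightarrow> 'f" where
  "mono_eval m x = (\<Prod>j\<in>Poly_Mapping.keys m. x j ^ Poly_Mapping.lookup m j)"

definition poly_eval :: "('k \<Rightarrow> 'f::field) \<Rightarrow> (('v \<Rightarrow>\<^sub>0 nat) \<Rightarrow>\<^sub>0 'k::zero) \<Rightarrow> ('v \<Rightarrow> 'f) \<Rightarrow> 'f" where
  "poly_eval \<iota> p x = (\<Sum>m\<in>Poly_Mapping.keys p. \<iota> (Poly_Mapping.lookup p m) * mono_eval m x)"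

definition alg_indep :: "('k::zero \<Rightarrow> 'f::field) \<Rightarrow> 'v set \<Rightarrow> ('v \<Rightarrow> 'f) \<Rightarrow> bool" where
  "alg_indep \<iota> J x \<longleftrightarrow> (\<forall>p::('v \<Rightarrow>\<^sub>0 nat) \<Rightarrow>\<^sub>0 'k. (\<forall>m\<in>Poly_Mapping.keys p. Poly_Mapping.keys m \<subseteq> J) \<longrightarrow> poly_eval \<iota> p x = 0 \<longrightarrow> p = 0)"

text \<open>Laurent polynomials over R in variables Y_0..Y_{N-1}, evaluated in a field via R \<rightarrow> K \<rightarrow> F\<close>
definition laurent_mono_eval :: "(nat \<Rightarrow>\<^sub>0 int) \<Rightarrow> (nat \<Rightarrow> 'f::field) \<Rightarrow> 'f" where
  "laurent_mono_eval m y = (\<Prod>i\<in>Poly_Mapping.keys m. y i powi Poly_Mapping.lookup m i)"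

definition laurent_eval :: "('r \<Rightarrow> 'f::field) \<Rightarrow> ((nat \<Rightarrow>\<^sub>0 int) \<Rightarrow>\<^sub>0 'r::zero) \<Rightarrow> (nat \<Rightarrow> 'f) \<Rightarrow> 'f" where
  "laurent_eval \<iota> \<Phi> y = (\<Sum>m\<in>Poly_Mapping.keys \<Phi>. \<iota> (Poly_Mapping.lookup \<Phi> m) * laurent_mono_eval m y)"

end

theory Submission
  imports Defs
begin

text \<open>
  Passing from \<open>h\<close> to an argument \<open>h + v\<^sub>i\<close> of the recursion goes strictly down in the
  order \<open>\<le>\<close> (strictly because the \<open>v\<^sub>i\<close> are independent over the nonnegative integers),
  and in a light-cone regular \<open>H\<close> all down-sets are finite; so one can induct over \<open>H\<close> along
  the recursion. By transitivity the points \<open>h\<close> with \<open>h\<^sub>0 \<le> h\<close> false are closed under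
  passing to arguments, and the initial ones among them differ from \<open>h\<^sub>0\<close>; so their values
  lie in the field generated by the constants and the other initial variables.
\<close>

lemma nsmul_add: "nsmul (a + b) (x::'a::ab_group_add) = nsmul a x + nsmul b x"
  by (induction a) (auto simp: add_ac)

lemma sum_nsmul_indicator:
  fixes v :: "nat \<Rightarrow> 'a::ab_group_add"
  assumes "i < N"
  shows "(\<Sum>j<N. nsmul (if j = i then 1 else 0) (v j)) = v i"
proof -
  have "(\<Sum>j<N. nsmul (if j = i then 1 else 0) (v j)) = (\<Sum>j<N. if j = i then v j else 0)"
    by (rule sum.cong) auto
  also have "\<dots> = v i"
    using assms by simp
  finally show ?thesis .
qed

lemma zero_in_cone: "(0::'a::ab_group_add) \<in> cone N v"
  unfolding cone_def by (auto intro: exI[of _ "\<lambda>_. 0"])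

lemma cone_add:
  assumes "x \<in> cone N v" "y \<in> cone N v"
  shows "(x::'a::ab_group_add) + y \<in> cone N v"
proof -
  obtain a b where "x = (\<Sum>i<N. nsmul (a i) (v i))" "y = (\<Sum>i<N. nsmul (b i) (v i))"
    using assms unfolding cone_def by auto
  then have "x + y = (\<Sum>i<N. nsmul (a i + b i) (v i))"
    by (simp add: nsmul_add sum.distrib)
  then show ?thesis
    unfolding cone_def by (auto intro!: exI[of _ "\<lambda>i. a i + b i"])
qed

lemma generator_in_cone:
  assumes "i < N"
  shows "(v i::'a::ab_group_add) \<in> cone N v"
  using sum_nsmul_indicator[OF assms, of v, symmetric] unfolding cone_def
  by (auto intro!: exI[of _ "\<lambda>j. if j = i then 1 else 0"])

lemma cle_refl: "cle N v (x::'a::ab_group_add) x"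
  unfolding cle_def by (simp add: zero_in_cone)

lemma cle_trans:
  assumes "cle N v x y" "cle N v y z"
  shows "cle N v (x::'a::ab_group_add) z"
proof -
  have "x - z = (x - y) + (y - z)"
    by simp
  then show ?thesis
    using assms cone_add[of "x - y" N v "y - z"] unfolding cle_def by simp
qed

lemma cle_add_generator:
  assumes "i < N"
  shows "cle N v (h + v i) (h::'a::ab_group_add)"
  unfolding cle_def using generator_in_cone[OF assms] by simp

lemma not_cle_add_generator:
  assumes indep: "nonneg_indep N v" and i: "i < N"
  shows "\<not> cle N v h (h + (v i::'a::ab_group_add))"
proof
  assume "cle N v h (h + v i)"
  then obtain a where a: "- v i = (\<Sum>j<N. nsmul (a j) (v j))"
    unfolding cle_def cone_def by auto
  define b where "b j = a j + (if j = i then 1 else 0)" for j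
  have "(\<Sum>j<N. nsmul (b j) (v j)) = - v i + v i"
    unfolding b_def nsmul_add sum.distrib a sum_nsmul_indicator[OF i] ..
  then have "\<forall>j<N. b j = 0"
    using indep unfolding nonneg_indep_def by simp
  then show False
    using i unfolding b_def by auto
qed

lemma light_cone_regular_induct [consumes 3, case_names step]:
  assumes regular: "light_cone_regular N v H" and indep: "nonneg_indep N v" and "h \<in> H"
    and step: "\<And>h. h \<in> H \<Longrightarrow> (\<And>i. i < N \<Longrightarrow> h + v i \<in> H \<Longrightarrow> P (h + v i)) \<Longrightarrow> P h"
  shows "P (h::'a::ab_group_add)"
  using \<open>h \<in> H\<close>
proof (induction "card {h'\<in>H. cle N v h' h}" arbitrary: h rule: less_induct)
  case less
  show ?case
  proof (rule step[OF less.prems])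
    fix i
    assume i: "i < N" and hi: "h + v i \<in> H"
    have "{h'\<in>H. cle N v h' (h + v i)} \<subseteq> {h'\<in>H. cle N v h' h}"
      using cle_trans[OF _ cle_add_generator[OF i]] by blast
    moreover have "h \<in> {h'\<in>H. cle N v h' h}" "h \<notin> {h'\<in>H. cle N v h' (h + v i)}"
      using less.prems cle_refl not_cle_add_generator[OF indep i] by auto
    ultimately have "{h'\<in>H. cle N v h' (h + v i)} \<subset> {h'\<in>H. cle N v h' h}"
      by blast
    moreover have "finite {h'\<in>H. cle N v h' h}"
      using regular less.prems unfolding light_cone_regular_def by blast
    ultimately have "card {h'\<in>H. cle N v h' (h + v i)} < card {h'\<in>H. cle N v h' h}"
      by (simp add: psubset_card_mono)
    then show "P (h + v i)"
      using less.hyps hi by blast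
  qed
qed

lemma is_subfield_gen_subfield: "is_subfield (gen_subfield (A::'f::field set))"
  unfolding gen_subfield_def is_subfield_def by auto

lemma subset_gen_subfield: "A \<subseteq> gen_subfield (A::'f::field set)"
  unfolding gen_subfield_def by auto

lemma subfield_sum:
  assumes "is_subfield F" "\<And>x. x \<in> S \<Longrightarrow> g x \<in> F"
  shows "sum g S \<in> (F::'f::field set)"
  using assms(2)
  by (induction S rule: infinite_finite_induct) (use assms(1) in \<open>auto simp: is_subfield_def\<close>)

lemma subfield_prod:
  assumes "is_subfield F" "\<And>x. x \<in> S \<Longrightarrow> g x \<in> F"
  shows "prod g S \<in> (F::'f::field set)"
  using assms(2)
  by (induction S rule: infinite_finite_induct) (use assms(1) in \<open>auto simp: is_subfield_def\<close>)

lemma subfield_power: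
  assumes "is_subfield F" "x \<in> F"
  shows "x ^ n \<in> (F::'f::field set)"
  using assms by (induction n) (auto simp: is_subfield_def)

lemma subfield_powi:
  assumes "is_subfield F" "x \<in> F"
  shows "x powi n \<in> (F::'f::field set)"
proof -
  have "inverse x \<in> F"
    using assms unfolding is_subfield_def by auto
  then show ?thesis
    using assms subfield_power unfolding power_int_def by auto
qed

lemma laurent_eval_in_subfield:
  assumes F: "is_subfield F"
    and coeffs: "\<And>m. m \<in> Poly_Mapping.keys \<Phi> \<Longrightarrow> c (Poly_Mapping.lookup \<Phi> m) \<in> F"
    and args: "\<And>m i. m \<in> Poly_Mapping.keys \<Phi> \<Longrightarrow> i \<in> Poly_Mapping.keys m \<Longrightarrow> y i \<in> F"
  shows "laurent_eval c \<Phi> y \<in> (F::'f::field set)"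
  unfolding laurent_eval_def
proof (rule subfield_sum[OF F])
  fix m
  assume m: "m \<in> Poly_Mapping.keys \<Phi>"
  have "laurent_mono_eval m y \<in> F"
    unfolding laurent_mono_eval_def
    by (rule subfield_prod[OF F]) (use F args[OF m] subfield_powi in blast)
  then show "c (Poly_Mapping.lookup \<Phi> m) * laurent_mono_eval m y \<in> F"
    using F coeffs[OF m] unfolding is_subfield_def by blast
qed

lemma recursion_value_in_subfield:
  fixes v :: "nat \<Rightarrow> 'a::ab_group_add" and f :: "'a \<Rightarrow> 'f::field"
  assumes regular: "light_cone_regular N v H" and indep: "nonneg_indep N v"
    and G: "is_subfield G"
    and vars: "\<forall>m\<in>Poly_Mapping.keys \<Phi>. Poly_Mapping.keys m \<subseteq> {..<N}"
    and coeffs: "range c \<subseteq> G"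
    and recursion: "\<forall>h\<in>H - init_boundary N v H. f h = laurent_eval c \<Phi> (\<lambda>i. f (h + v i))"
    and U_closed: "\<And>h i. h \<in> U \<Longrightarrow> i < N \<Longrightarrow> h + v i \<in> U"
    and U_initial: "f ` (init_boundary N v H \<inter> U) \<subseteq> G"
    and "h \<in> H" "h \<in> U"
  shows "f h \<in> G"
proof -
  have "h \<in> U \<longrightarrow> f h \<in> G"
    using regular indep \<open>h \<in> H\<close>
  proof (induction h rule: light_cone_regular_induct)
    case (step h)
    show ?case
    proof
      assume "h \<in> U"
      show "f h \<in> G"
      proof (cases "h \<in> init_boundary N v H")
        case True
        then show ?thesis
          using \<open>h \<in> U\<close> U_initial by blast
      next
        case False
        then have args: "h + v i \<in> H" if "i < N" for i
          using step.hyps that unfolding init_boundary_def by auto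
        have "laurent_eval c \<Phi> (\<lambda>i. f (h + v i)) \<in> G"
        proof (rule laurent_eval_in_subfield[OF G])
          show "c (Poly_Mapping.lookup \<Phi> m) \<in> G" for m
            using coeffs by blast
          show "f (h + v i) \<in> G" if "m \<in> Poly_Mapping.keys \<Phi>" "i \<in> Poly_Mapping.keys m" for m i
          proof -
            have "i < N"
              using vars that by blast
            then show ?thesis
              using step.IH args U_closed \<open>h \<in> U\<close> by blast
          qed
        qed
        then show ?thesis
          using recursion False step.hyps by simp
      qed
    qed
  qed
  then show ?thesis
    using \<open>h \<in> U\<close> by blast
qed

theorem lemma3p3:
  fixes N :: nat
    and v :: "nat \<Rightarrow> 'l::ab_group_add"
    and \<Phi> :: "(nat \<Rightarrow>\<^sub>0 int) \<Rightarrow>\<^sub>0 'r::{factorial_semiring, idom}"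
    and \<iota> :: "'r fract \<Rightarrow> 'f::field"
    and H :: "'l set"
    and f :: "'l \<Rightarrow> 'f"
    and h h0 :: 'l
  assumes L_fg: "fin_gen_Zmod TYPE('l)"
    and v_distinct: "inj_on v {..<N}"
    and v_indep: "nonneg_indep N v"
    and \<Phi>_vars: "\<forall>m\<in>Poly_Mapping.keys \<Phi>. Poly_Mapping.keys m \<subseteq> {..<N}"
    and \<iota>_hom: "field_hom \<iota>"
    and H_reg: "light_cone_regular N v H"
    and init_indep: "alg_indep \<iota> (init_boundary N v H) f"
    and F_gen: "gen_subfield (range \<iota> \<union> f ` init_boundary N v H) = UNIV"
    and f_eq: "\<forall>h\<in>H - init_boundary N v H.
                 f h = laurent_eval (\<lambda>r. \<iota> (Fract r 1)) \<Phi> (\<lambda>i. f (h + v i))"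
    and h_in: "h \<in> H"
    and h0_in: "h0 \<in> init_boundary N v H"
    and not_le: "\<not> cle N v h0 h"
  shows "f h \<in> gen_subfield (range \<iota> \<union> f ` (init_boundary N v H - {h0}))"
proof -
  define G where "G = gen_subfield (range \<iota> \<union> f ` (init_boundary N v H - {h0}))"
  define U where "U = {h. \<not> cle N v h0 h}"
  have generators: "range \<iota> \<union> f ` (init_boundary N v H - {h0}) \<subseteq> G"
    unfolding G_def by (rule subset_gen_subfield)
  show ?thesis
    unfolding G_def[symmetric]
  proof (rule recursion_value_in_subfield[OF H_reg v_indep _ \<Phi>_vars _ f_eq _ _ h_in])
    show "is_subfield G"
      unfolding G_def by (rule is_subfield_gen_subfield)
    show "range (\<lambda>r. \<iota> (Fract r 1)) \<subseteq> G"
      using generators by blast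
    show "h + v i \<in> U" if "h \<in> U" "i < N" for h i
      using that cle_trans[OF _ cle_add_generator[OF that(2)]] unfolding U_def by auto
    have "init_boundary N v H \<inter> U \<subseteq> init_boundary N v H - {h0}"
      unfolding U_def using cle_refl by blast
    then show "f ` (init_boundary N v H \<inter> U) \<subseteq> G"
      using generators by blast
    show "h \<in> U"
      unfolding U_def using not_le by simp
  qed
qed

end
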